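(* Let $\Theta$ and $\Theta'$ be two flow rules defined respectively by positive measurable functions $\phi$ and $\phi'$ via $\Theta_T(i) = \phi(T[i]) / \sum_{j=1}^{\nu_T(\varnothing)} \phi(T[j])$ and $\Theta'_T(i) = \phi'(T[i]) / \sum_{j=1}^{\nu_T(\varnothing)} \phi'(T[j])$ for $1 \leq i \leq \nu_T(\varnothing)$. Then $\Theta_T = \Theta'_T$ almost surely if and only if the functions $\phi$ and $\phi'$ are proportional.
   Context: Trees are rooted, planar, locally finite, leafless trees (Neveu formalism: subsets of finite words on $\{1,2,\dots\}$ containing the root $\varnothing$), each vertex $x$ carrying a non-negative real mark. For a vertex $x$ of a marked tree $t$, $t[x]$ is the reindexed marked subtree rooted at $x$, and $\nu_t(x)$ is the number of children of $x$. Let $\mathbf{p}=(p_k)_{k\ge0}$ be a reproduction law with $p_0 = 0$, $p_1 < 1$ and finite mean $m$, and let $\Gamma$ be a random variable with values in $\mathbb{R}_+$. A $(\Gamma,\mathbf{p})$-Galton-Watson tree $T$ is a Galton-Watson tree with reproduction law $\mathbf{p}$ carrying i.i.d. marks distributed as $\Gamma$; its law is denoted $\mathrm{GW}$. A flow on a tree $t$ is a function $\theta: t\to[0,1]$ with $\theta(\varnothing)=1$ and $\theta(x)=\sum_{i=1}^{\nu_t(x)}\theta(xi)$; a ($\mathrm{GW}$-)flow rule is a measurable map $t\mapsto\Theta_t$, defined on a Borel set of full $\mathrm{GW}$-measure, assigning to each tree a flow with $\Theta_t(x)>0$ for all $x$ and satisfying the consistency relation $\Theta_{t[x]}(y)=\Theta_t(xy)/\Theta_t(x)$.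 Here $\phi$ and $\phi'$ are measurable positive functions defined on a Borel set of marked leafless trees of full $\mathrm{GW}$-measure, and the flow rules are determined on the first generation by the displayed formula and extended by consistency. *)

theory Defs
  imports "HOL-Probability.Probability"
begin

text \<open>A (marked) tree is encoded as a function assigning to every finite word
  over positive integers (Neveu formalism, child of x is x @ [i]) a pair
  (number of children, mark). Only the values on the vertex set matter;
  canonical trees carry (0,0) outside their vertex set.\<close>

type_synonym mtree = "nat list \<Rightarrow> nat \<times> real"

definition nu :: "mtree \<Rightarrow> nat list \<Rightarrow> nat" where
  "nu t x = fst (t x)"

definition mark :: "mtree \<Rightarrow> nat list \<Rightarrow> real" where
  "mark t x = snd (t x)"

definition vert :: "mtree \<Rightarrow> nat list set" where
  "vert t = {x. \<forall>k<length x. 1 \<le> x ! k \<and> x ! k \<le> nu t (take k x)}"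

definition sub :: "mtree \<Rightarrow> nat list \<Rightarrow> mtree" where
  "sub t x = (\<lambda>y. t (x @ y))"

definition MTS :: "mtree measure" where
  "MTS = PiM UNIV (\<lambda>_::nat list. count_space UNIV \<Otimes>\<^sub>M (borel :: real measure))"

text \<open>Tree generated by an i.i.d. family of (offspring number, mark) labels.\<close>
definition canon :: "mtree \<Rightarrow> mtree" where
  "canon w = (\<lambda>x. if x \<in> vert w then w x else (0, 0))"

definition GW :: "nat pmf \<Rightarrow> real measure \<Rightarrow> mtree measure" where
  "GW p G = distr (PiM UNIV (\<lambda>_::nat list. measure_pmf p \<Otimes>\<^sub>M G)) MTS canon"

definition theta1 :: "(mtree \<Rightarrow> real) \<Rightarrow> mtree \<Rightarrow> nat \<Rightarrow> real" where
  "theta1 \<phi> t i = \<phi> (sub t [i]) / (\<Sum>j = 1..nu t []. \<phi> (sub t [j]))"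

text \<open>Extension by consistency: Theta_t(x i) = Theta_t(x) * Theta_{t[x]}(i).\<close>
definition flow :: "(mtree \<Rightarrow> real) \<Rightarrow> mtree \<Rightarrow> nat list \<Rightarrow> real" where
  "flow \<phi> t x = (\<Prod>k<length x. theta1 \<phi> (sub t (take k x)) (x ! k))"

end

theory Submission
  imports Defs
begin

text \<open>If the two flow rules agree, then on the event that the root has at least two children
  the normalisations cancel in the ratio of the first-generation flows, so the ratio
  \<open>X = \<phi> / \<phi>'\<close> takes the same value on the subtrees \<open>T[1]\<close> and \<open>T[2]\<close>. These are two
  independent copies of the Galton-Watson tree, independent of the root degree, and the event
  has positive probability because \<open>p\<^sub>0 = 0\<close> and \<open>p\<^sub>1 < 1\<close>. Hence every level set
  \<open>{X \<le> q}\<close> has probability 0 or 1, and \<open>X\<close> is almost surely constant. Conversely,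
  proportional functions give the same normalised weights at every vertex.\<close>

lemma sub_Nil[simp]: "sub t [] = t"
  by (simp add: sub_def)

lemma sub_sub[simp]: "sub (sub t x) y = sub t (x @ y)"
  by (simp add: sub_def)

lemma nu_sub[simp]: "nu (sub t x) y = nu t (x @ y)"
  by (simp add: sub_def nu_def)

lemma Nil_in_vert[simp]: "[] \<in> vert t"
  by (simp add: vert_def)

lemma all_less_add_iff: "(\<forall>k<a+b. P (k::nat)) \<longleftrightarrow> (\<forall>k<a. P k) \<and> (\<forall>k<b. P (a+k))"
  by (metis add_less_cancel_left not_less trans_less_add1 le_Suc_ex)

lemma append_in_vert_iff: "x @ y \<in> vert t \<longleftrightarrow> x \<in> vert t \<and> y \<in> vert (sub t x)"
  unfolding vert_def mem_Collect_eq length_append all_less_add_iff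
  by (simp add: nth_append)

lemma snoc_in_vert_iff: "x @ [a] \<in> vert t \<longleftrightarrow> x \<in> vert t \<and> 1 \<le> a \<and> a \<le> nu t x"
  unfolding append_in_vert_iff by (simp add: vert_def)

lemma take_in_vert: "x \<in> vert t \<Longrightarrow> take k x \<in> vert t"
  using append_in_vert_iff[of "take k x" "drop k x" t] by simp

lemma vert_canon[simp]: "vert (canon w) = vert w"
proof -
  have "x \<in> vert (canon w) \<longleftrightarrow> x \<in> vert w" for x
    by (induction x rule: rev_induct) (auto simp: snoc_in_vert_iff nu_def canon_def)
  then show ?thesis by blast
qed

lemma sub_canon: "x \<in> vert w \<Longrightarrow> sub (canon w) x = canon (sub w x)"
  by (auto simp: sub_def canon_def fun_eq_iff append_in_vert_iff[unfolded sub_def])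

lemma nu_canon_Nil[simp]: "nu (canon w) [] = nu w []"
  by (simp add: canon_def nu_def)

lemma measurable_nu[measurable]: "(\<lambda>t. nu t x) \<in> measurable MTS (count_space UNIV)"
  unfolding nu_def MTS_def by measurable

lemma pred_in_vert[measurable]: "Measurable.pred MTS (\<lambda>t. x \<in> vert t)"
  unfolding vert_def mem_Collect_eq by measurable

lemma measurable_sub[measurable]: "(\<lambda>t. sub t x) \<in> measurable MTS MTS"
  unfolding sub_def MTS_def by (rule measurable_PiM_single') (auto simp: space_PiM)

lemma measurable_label[measurable]: "(\<lambda>t. t x) \<in> measurable MTS (count_space UNIV \<Otimes>\<^sub>M borel)"
  unfolding MTS_def by simp

lemma measurable_canon[measurable]: "canon \<in> measurable MTS MTS"
proof -
  have "(\<lambda>w i. (\<lambda>i w. if i \<in> vert w then w i else (0,0)) i w)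
      \<in> measurable MTS (PiM UNIV (\<lambda>_. count_space UNIV \<Otimes>\<^sub>M borel))"
    by (rule measurable_PiM_single') (measurable, auto simp: space_PiM space_pair_measure)
  then show ?thesis unfolding canon_def MTS_def[symmetric] by simp
qed

lemma theta1_eq_if_proportional:
  assumes "c \<noteq> 0"
    and scaled: "\<And>j. 1 \<le> j \<Longrightarrow> j \<le> nu t [] \<Longrightarrow> \<phi> (sub t [j]) = c * \<phi>' (sub t [j])"
    and "1 \<le> i" "i \<le> nu t []"
  shows "theta1 \<phi> t i = theta1 \<phi>' t i"
proof -
  have "(\<Sum>j = 1..nu t []. \<phi> (sub t [j])) = c * (\<Sum>j = 1..nu t []. \<phi>' (sub t [j]))"
    by (simp add: sum_distrib_left scaled)
  then show ?thesis
    using assms by (simp add: theta1_def)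
qed

lemma flow_eq_if_proportional:
  assumes "c \<noteq> 0" and scaled: "\<forall>y\<in>vert t. \<phi> (sub t y) = c * \<phi>' (sub t y)" and x: "x \<in> vert t"
  shows "flow \<phi> t x = flow \<phi>' t x"
  unfolding flow_def
proof (rule prod.cong[OF refl])
  fix k assume "k \<in> {..<length x}"
  then have "1 \<le> x ! k" "x ! k \<le> nu t (take k x)"
    using x by (simp_all add: vert_def)
  moreover have "\<phi> (sub t (take k x @ [j])) = c * \<phi>' (sub t (take k x @ [j]))"
    if "1 \<le> j" "j \<le> nu t (take k x)" for j
    using scaled take_in_vert[OF x] that by (simp add: snoc_in_vert_iff)
  ultimately show "theta1 \<phi> (sub t (take k x)) (x ! k) = theta1 \<phi>' (sub t (take k x)) (x ! k)"
    using \<open>c \<noteq> 0\<close> by (intro theta1_eq_if_proportional) auto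
qed

lemma flow_singleton: "flow \<phi> t [i] = theta1 \<phi> t i"
  by (simp add: flow_def)

lemma ratio_eq_if_theta1_eq:
  assumes pos: "\<And>j. 1 \<le> j \<Longrightarrow> j \<le> nu t [] \<Longrightarrow> 0 < \<phi> (sub t [j]) \<and> 0 < \<phi>' (sub t [j])"
    and i: "1 \<le> i" "i \<le> nu t []" and eq: "theta1 \<phi> t i = theta1 \<phi>' t i"
  shows "\<phi> (sub t [i]) / \<phi>' (sub t [i])
    = (\<Sum>j = 1..nu t []. \<phi> (sub t [j])) / (\<Sum>j = 1..nu t []. \<phi>' (sub t [j]))"
proof -
  have "0 < (\<Sum>j = 1..nu t []. \<phi> (sub t [j]))" "0 < (\<Sum>j = 1..nu t []. \<phi>' (sub t [j]))"
    using pos i by (auto intro!: sum_pos)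
  with eq pos[OF i] show ?thesis
    by (auto simp: theta1_def field_simps)
qed

lemma AE_eq_const_if_zero_one:
  fixes X :: "'a \<Rightarrow> real"
  assumes "prob_space N" and [measurable]: "X \<in> borel_measurable N"
    and zero_one: "\<And>q. measure N {y\<in>space N. X y \<le> q} = 0 \<or> measure N {y\<in>space N. X y \<le> q} = 1"
  shows "\<exists>c. AE y in N. X y = c"
proof -
  interpret N: prob_space N by fact
  define S where "S = {q. measure N {y\<in>space N. X y \<le> q} = 1}"
  have "AE y in N. X y \<le> q \<longleftrightarrow> q \<in> S" for q
  proof (cases "q \<in> S")
    case True
    then have "AE y in N. y \<in> {y\<in>space N. X y \<le> q}"
      by (intro N.AE_prob_1) (simp add: S_def)
    then show ?thesis by eventually_elim (use True in auto)
  next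
    case False
    then have "AE y in N. y \<notin> {y\<in>space N. X y \<le> q}"
      using zero_one[of q] N.prob_eq_0[of "{y\<in>space N. X y \<le> q}"] by (simp add: S_def)
    moreover have "AE y in N. y \<in> space N" by simp
    ultimately show ?thesis by eventually_elim (use False in auto)
  qed
  then have ae: "AE y in N. \<forall>q\<in>\<rat>. X y \<le> q \<longleftrightarrow> q \<in> S"
    by (subst AE_ball_countable) (auto intro: countable_rat)
  have "\<exists>y0. \<forall>q\<in>\<rat>. X y0 \<le> q \<longleftrightarrow> q \<in> S"
  proof (rule ccontr)
    assume "\<nexists>y0. \<forall>q\<in>\<rat>. X y0 \<le> q \<longleftrightarrow> q \<in> S"
    then show False using N.AE_contr[OF ae] by auto
  qed
  then obtain y0 where y0: "\<forall>q\<in>\<rat>. X y0 \<le> q \<longleftrightarrow> q \<in> S" ..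
  have "AE y in N. X y = X y0"
    using ae
  proof eventually_elim
    case (elim y)
    show ?case
    proof (rule ccontr)
      assume "X y \<noteq> X y0"
      then consider "X y < X y0" | "X y0 < X y" by linarith
      then show False
      proof cases
        case 1
        then obtain q where "q \<in> \<rat>" "X y < q" "q < X y0" using Rats_dense_in_real by blast
        then show False using elim y0 by force
      next
        case 2
        then obtain q where "q \<in> \<rat>" "X y0 < q" "q < X y" using Rats_dense_in_real by blast
        then show False using elim y0 by force
      qed
    qed
  qed
  then show ?thesis by blast
qed

lemma AE_const_if_AE_eq_on_indep_copies:
  fixes X :: "'b \<Rightarrow> real"
  assumes "prob_space M" "prob_space N"
    and [measurable]: "X \<in> borel_measurable N" "Z \<in> measurable M N" "Z' \<in> measurable M N"
    and law: "distr M N Z = N" "distr M N Z' = N"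
    and E: "E \<in> sets M" "measure M E > 0"
    and indep: "\<And>A B. A \<in> sets N \<Longrightarrow> B \<in> sets N \<Longrightarrow>
       measure M (E \<inter> (Z -` A \<inter> space M) \<inter> (Z' -` B \<inter> space M))
         = measure M E * measure M (Z -` A \<inter> space M) * measure M (Z' -` B \<inter> space M)"
    and ae: "AE w in M. w \<in> E \<longrightarrow> X (Z w) = X (Z' w)"
  shows "\<exists>c. AE y in N. X y = c"
proof (rule AE_eq_const_if_zero_one)
  interpret M: prob_space M by fact
  interpret N: prob_space N by fact
  fix q
  define A where "A = {y\<in>space N. X y \<le> q}"
  have A: "A \<in> sets N" "space N - A \<in> sets N"
    unfolding A_def by measurable
  txt \<open>Since \<open>X \<circ> Z = X \<circ> Z'\<close> a.s. on \<open>E\<close>, the event \<open>E \<inter> {X \<circ> Z \<le> q < X \<circ> Z'}\<close> is null;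
    by independence this says \<open>P(E) P(X \<le> q) (1 - P(X \<le> q)) = 0\<close>.\<close>
  let ?S = "E \<inter> (Z -` A \<inter> space M) \<inter> (Z' -` (space N - A) \<inter> space M)"
  have "AE w in M. w \<notin> ?S"
    using ae by eventually_elim (auto simp: A_def)
  then have "measure M ?S = 0"
    using E A by (subst M.prob_eq_0) auto
  moreover have "measure M (Zi -` B \<inter> space M) = measure N B"
    if "B \<in> sets N" "Zi \<in> measurable M N" "distr M N Zi = N" for B Zi
    using measure_distr[OF that(2,1)] that(3) by simp
  ultimately have "measure M E * measure N A * (1 - measure N A) = 0"
    using indep[OF A] law A N.prob_compl[OF A(1)] by simp
  then show "measure N A = 0 \<or> measure N A = 1"
    using E(2) by auto
qed fact+

lemma indep_vars_PiM_components:
  assumes "prob_space M"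
  shows "prob_space.indep_vars (PiM UNIV (\<lambda>_::'i. M)) (\<lambda>_. M) (\<lambda>i w. w i) UNIV"
proof -
  interpret W: prob_space "PiM UNIV (\<lambda>_::'i. M)"
    using assms by (intro prob_space_PiM)
  have "distr (PiM UNIV (\<lambda>_::'i. M)) M (\<lambda>w. w i) = M" for i
    using assms by (intro distr_PiM_component) auto
  then show ?thesis
    by (subst W.indep_vars_iff_distr_eq_PiM) (simp_all add: restrict_UNIV)
qed

lemma measurable_sub_PiM[measurable]:
  "(\<lambda>w. sub w x) \<in> measurable (PiM UNIV (\<lambda>_::nat list. M)) (PiM UNIV (\<lambda>_. M))"
  unfolding sub_def by (rule measurable_PiM_single') (auto simp: space_PiM)

lemma distr_PiM_sub:
  assumes "prob_space M"
  shows "distr (PiM UNIV (\<lambda>_::nat list. M)) (PiM UNIV (\<lambda>_. M)) (\<lambda>w. sub w x) = PiM UNIV (\<lambda>_. M)"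
  using distr_PiM_reindex[of UNIV "\<lambda>_. M" "(@) x" UNIV] assms
  by (simp add: sub_def inj_on_def restrict_def)

lemma AE_PiM_sub:
  assumes "prob_space M" and [measurable]: "Measurable.pred (PiM UNIV (\<lambda>_::nat list. M)) P"
    and "AE w in PiM UNIV (\<lambda>_::nat list. M). P w"
  shows "AE w in PiM UNIV (\<lambda>_::nat list. M). P (sub w x)"
proof -
  have "AE w in distr (PiM UNIV (\<lambda>_::nat list. M)) (PiM UNIV (\<lambda>_. M)) (\<lambda>w. sub w x). P w"
    unfolding distr_PiM_sub[OF assms(1)] by (rule assms(3))
  then show ?thesis
    by (subst (asm) AE_distr_iff) auto
qed

lemma indep_root_children_PiM:
  assumes M: "prob_space M" and [measurable]: "Measurable.pred M R" and "i \<noteq> j"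
    and A: "A \<in> sets (PiM UNIV (\<lambda>_::nat list. M))" and B: "B \<in> sets (PiM UNIV (\<lambda>_::nat list. M))"
  defines "W \<equiv> PiM UNIV (\<lambda>_::nat list. M)"
  defines "E \<equiv> {w \<in> space W. R (w [])}"
  shows "measure W (E \<inter> ((\<lambda>w. sub w [i]) -` A \<inter> space W) \<inter> ((\<lambda>w. sub w [j]) -` B \<inter> space W))
     = measure W E * measure W ((\<lambda>w. sub w [i]) -` A \<inter> space W)
         * measure W ((\<lambda>w. sub w [j]) -` B \<inter> space W)"
proof -
  interpret W: prob_space W
    unfolding W_def using M by (intro prob_space_PiM)
  txt \<open>The root label and the labels of the subtrees at \<open>i\<close> and \<open>j\<close> are read off
    the disjoint coordinate blocks \<open>K 0\<close>, \<open>K 1\<close>, \<open>K 2\<close> of the i.i.d. family.\<close>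
  define c where "c k = (if k = (1::nat) then i else j)" for k
  define K where "K k = (if k = 0 then {[]} else range ((#) (c k)))" for k
  define g where "g k y = (\<lambda>z. y (c k # z))" for k and y :: "nat list \<Rightarrow> nat \<times> real"
  define A' where "A' k = (if k = 0 then {y \<in> space (PiM (K 0) (\<lambda>_. M)). R (y [])}
      else g k -` (if k = 1 then A else B) \<inter> space (PiM (K k) (\<lambda>_. M)))" for k
  have indep: "W.indep_vars (\<lambda>k. PiM (K k) (\<lambda>_. M)) (\<lambda>k \<omega>. restrict \<omega> (K k)) {0,1,2}"
    using indep_vars_PiM_components[OF M, where 'i="nat list"] unfolding W_def[symmetric]
    by (rule W.indep_vars_restrict) (use \<open>i \<noteq> j\<close> in \<open>auto simp: K_def c_def disjoint_family_on_def\<close>)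
  have "(\<lambda>y. y []) \<in> measurable (PiM (K 0) (\<lambda>_. M)) M"
    by (rule measurable_component_singleton) (simp add: K_def)
  then have "A' 0 \<in> sets (PiM (K 0) (\<lambda>_. M))"
    unfolding A'_def if_P[OF refl] by measurable
  moreover have "g k \<in> measurable (PiM (K k) (\<lambda>_. M)) W" if "k \<noteq> 0" for k
    unfolding g_def W_def
    by (rule measurable_PiM_single') (use that in \<open>auto simp: space_PiM K_def\<close>)
  ultimately have A': "A' k \<in> sets (PiM (K k) (\<lambda>_. M))" if "k \<in> {0,1,2}" for k
    using that A B unfolding A'_def W_def by (auto intro!: measurable_sets)
  define F where "F k = (\<lambda>\<omega>. restrict \<omega> (K k)) -` A' k \<inter> space W" for k
  have F: "F k = (if k = 0 then E else (\<lambda>w. sub w [c k]) -` (if k = 1 then A else B) \<inter> space W)"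
    if "k \<in> {0,1,2}" for k
  proof -
    have "g k (restrict w (K k)) = sub w [c k]" if "k \<noteq> 0" for k w
      using that by (simp add: g_def sub_def K_def fun_eq_iff)
    moreover have "restrict w (K k) \<in> space (PiM (K k) (\<lambda>_. M))" if "w \<in> space W" for w
      using that by (auto simp: W_def space_PiM)
    ultimately show ?thesis
      using that by (auto simp: F_def A'_def E_def K_def)
  qed
  have "W.prob (\<Inter>k\<in>{0,1,2}. F k) = (\<Prod>k\<in>{0,1,2}. W.prob (F k))"
    unfolding F_def by (rule W.indep_varsD[OF indep]) (use A' in auto)
  moreover have "(\<Inter>k\<in>{0,1,2}. F k) = F 0 \<inter> F 1 \<inter> F 2"
    by auto
  ultimately show ?thesis
    using F[of 0] F[of 1] F[of 2] by (simp add: c_def mult.assoc)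
qed

locale marked_GW =
  fixes p :: "nat pmf" and G :: "real measure"
  assumes prob_space_G: "prob_space G" and sets_G: "sets G = sets borel"
begin

abbreviation label_law :: "(nat \<times> real) measure" where
  "label_law \<equiv> measure_pmf p \<Otimes>\<^sub>M G"

abbreviation labels :: "mtree measure" where
  "labels \<equiv> PiM UNIV (\<lambda>_::nat list. label_law)"

lemma prob_space_label_law: "prob_space label_law"
  using prob_space_G by (intro prob_space_pair) (auto simp: prob_space_measure_pmf)

sublocale labels: prob_space labels
  using prob_space_label_law by (intro prob_space_PiM)

lemma sets_labels: "sets labels = sets MTS"
  unfolding MTS_def by (intro sets_PiM_cong sets_pair_measure_cong) (auto simp: sets_G)

lemma measurable_labels_iff: "measurable labels N = measurable MTS N"
  by (rule measurable_cong_sets[OF sets_labels refl])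

lemma measurable_canon_labels[measurable]: "canon \<in> measurable labels MTS"
  by (simp add: measurable_labels_iff)

lemma AE_GW_iff:
  "Measurable.pred MTS P \<Longrightarrow> (AE t in GW p G. P t) \<longleftrightarrow> (AE w in labels. P (canon w))"
  unfolding GW_def by (intro AE_distr_iff) auto

lemma AE_labels_sub:
  "Measurable.pred labels P \<Longrightarrow> AE w in labels. P w \<Longrightarrow> AE w in labels. P (sub w x)"
  using AE_PiM_sub[OF prob_space_label_law] by blast

lemma prob_two_children_pos:
  assumes "pmf p 0 = 0" "pmf p 1 < 1"
  shows "0 < labels.prob {w \<in> space labels. 2 \<le> nu w []}"
proof -
  let ?C = "{z \<in> space label_law. 2 \<le> fst z}"
  have C: "?C \<in> sets label_law"
    using measurable_sets[OF measurable_fst, of "{n. 2 \<le> n}" "measure_pmf p" G]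
    by (simp add: Int_def conj_commute)
  have "labels.prob {w \<in> space labels. 2 \<le> nu w []} = labels.prob ((\<lambda>w. w []) -` ?C \<inter> space labels)"
    by (intro arg_cong[where f = labels.prob]) (auto simp: nu_def space_PiM)
  also have "\<dots> = measure (distr labels label_law (\<lambda>w. w [])) ?C"
    using C by (simp add: measure_distr)
  also have "distr labels label_law (\<lambda>w. w []) = label_law"
    using prob_space_label_law by (intro distr_PiM_component) auto
  also have "measure label_law ?C = measure label_law (fst -` {n. 2 \<le> n} \<inter> space label_law)"
    by (intro arg_cong[where f = "measure label_law"]) auto
  also have "\<dots> = measure (distr label_law (measure_pmf p) fst) {n. 2 \<le> n}"
    by (rule measure_distr[OF measurable_fst, symmetric]) auto
  also have "distr label_law (measure_pmf p) fst = measure_pmf p"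
    using prob_space_G by (rule prob_space.distr_pair_fst)
  also have "{n. 2 \<le> n} = space (measure_pmf p) - {0, 1}"
    by auto
  also have "measure (measure_pmf p) (space (measure_pmf p) - {0, 1}) = 1 - (pmf p 0 + pmf p 1)"
    by (subst measure_pmf.prob_compl) (auto simp: measure_measure_pmf_finite)
  finally show ?thesis
    using assms by simp
qed

lemma AE_GW_D: "AE t in GW p G. P t \<Longrightarrow> AE w in labels. P (canon w)"
  unfolding GW_def by (rule AE_distrD[OF measurable_canon_labels])

lemma AE_flow_eq_if_proportional:
  assumes [measurable]: "\<phi> \<in> borel_measurable MTS" "\<phi>' \<in> borel_measurable MTS"
    and "c \<noteq> 0" and proportional: "AE t in GW p G. \<phi> t = c * \<phi>' t"
  shows "AE t in GW p G. \<forall>x\<in>vert t. flow \<phi> t x = flow \<phi>' t x"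
proof -
  have [measurable]: "Measurable.pred MTS (\<lambda>t. \<phi> (sub t y) = c * \<phi>' (sub t y))" for y
    unfolding pred_def by measurable
  have pred: "Measurable.pred MTS (\<lambda>t. \<forall>y. y \<in> vert t \<longrightarrow> \<phi> (sub t y) = c * \<phi>' (sub t y))"
    by measurable
  have "AE w in labels. \<phi> (canon (sub w y)) = c * \<phi>' (canon (sub w y))" for y
    using AE_GW_D[OF proportional] by (rule AE_labels_sub[rotated])
      (unfold measurable_labels_iff pred_def, measurable)
  then have "AE w in labels. \<forall>y. \<phi> (canon (sub w y)) = c * \<phi>' (canon (sub w y))"
    by (subst AE_all_countable) auto
  then have "AE w in labels. \<forall>y. y \<in> vert (canon w) \<longrightarrow>
      \<phi> (sub (canon w) y) = c * \<phi>' (sub (canon w) y)"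
    by eventually_elim (auto simp: sub_canon)
  then have "AE t in GW p G. \<forall>y. y \<in> vert t \<longrightarrow> \<phi> (sub t y) = c * \<phi>' (sub t y)"
    by (simp add: AE_GW_iff[OF pred])
  then show ?thesis
    by eventually_elim (use flow_eq_if_proportional \<open>c \<noteq> 0\<close> in blast)
qed

lemma AE_children_ratio_eq_if_AE_flow_eq:
  assumes [measurable]: "\<phi> \<in> borel_measurable MTS" "\<phi>' \<in> borel_measurable MTS"
    and pos: "AE t in GW p G. 0 < \<phi> t \<and> 0 < \<phi>' t"
    and flow_eq: "AE t in GW p G. \<forall>x\<in>vert t. flow \<phi> t x = flow \<phi>' t x"
  shows "AE w in labels. 2 \<le> nu w [] \<longrightarrow>
    \<phi> (canon (sub w [1])) / \<phi>' (canon (sub w [1])) = \<phi> (canon (sub w [2])) / \<phi>' (canon (sub w [2]))"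
proof -
  have "AE w in labels. 0 < \<phi> (canon (sub w [j])) \<and> 0 < \<phi>' (canon (sub w [j]))" for j
    using AE_GW_D[OF pos] by (rule AE_labels_sub[rotated])
      (unfold measurable_labels_iff pred_def, measurable)
  then have "AE w in labels. \<forall>j. 0 < \<phi> (canon (sub w [j])) \<and> 0 < \<phi>' (canon (sub w [j]))"
    by (subst AE_all_countable) auto
  with AE_GW_D[OF flow_eq] show ?thesis
  proof eventually_elim
    case (elim w)
    let ?t = "canon w"
    have sub_t: "sub ?t [j] = canon (sub w [j])" if "1 \<le> j" "j \<le> nu w []" for j
      using that by (intro sub_canon) (simp add: vert_def)
    have "\<phi> (canon (sub w [i])) / \<phi>' (canon (sub w [i]))
        = (\<Sum>j = 1..nu ?t []. \<phi> (sub ?t [j])) / (\<Sum>j = 1..nu ?t []. \<phi>' (sub ?t [j]))"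
      if "1 \<le> i" "i \<le> nu w []" for i
    proof -
      have "flow \<phi> ?t [i] = flow \<phi>' ?t [i]"
        using elim(1) that by (simp add: vert_def)
      then show ?thesis
        using ratio_eq_if_theta1_eq[of ?t \<phi> \<phi>' i] elim(2) that sub_t
        by (simp add: flow_singleton)
    qed
    then show ?case
      by force
  qed
qed

lemma proportional_if_AE_flow_eq:
  assumes "pmf p 0 = 0" "pmf p 1 < 1"
    and [measurable]: "\<phi> \<in> borel_measurable MTS" "\<phi>' \<in> borel_measurable MTS"
    and pos: "AE t in GW p G. 0 < \<phi> t \<and> 0 < \<phi>' t"
    and flow_eq: "AE t in GW p G. \<forall>x\<in>vert t. flow \<phi> t x = flow \<phi>' t x"
  shows "\<exists>c>0. AE t in GW p G. \<phi> t = c * \<phi>' t"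
proof -
  define X where "X w = \<phi> (canon w) / \<phi>' (canon w)" for w
  define E where "E = {w \<in> space labels. 2 \<le> nu w []}"
  have [measurable]: "X \<in> borel_measurable labels"
    unfolding X_def measurable_labels_iff by measurable
  have root: "Measurable.pred label_law (\<lambda>z. 2 \<le> fst z)"
    by measurable
  have E_root: "E = {w \<in> space labels. 2 \<le> fst (w [])}"
    by (simp add: E_def nu_def)
  have "\<exists>c. AE w in labels. X w = c"
  proof (rule AE_const_if_AE_eq_on_indep_copies[where Z = "\<lambda>w. sub w [1]" and Z' = "\<lambda>w. sub w [2]"])
    show "E \<in> sets labels"
      unfolding E_root using root by measurable
    show "0 < labels.prob E"
      unfolding E_def using assms(1,2) by (rule prob_two_children_pos)
    show "labels.prob (E \<inter> ((\<lambda>w. sub w [1]) -` A \<inter> space labels)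
        \<inter> ((\<lambda>w. sub w [2]) -` B \<inter> space labels))
      = labels.prob E * labels.prob ((\<lambda>w. sub w [1]) -` A \<inter> space labels)
          * labels.prob ((\<lambda>w. sub w [2]) -` B \<inter> space labels)"
      if "A \<in> sets labels" "B \<in> sets labels" for A B
      unfolding E_root using indep_root_children_PiM[OF prob_space_label_law root _ that] by simp
    show "AE w in labels. w \<in> E \<longrightarrow> X (sub w [1]) = X (sub w [2])"
      using AE_children_ratio_eq_if_AE_flow_eq[OF assms(3-6)] by eventually_elim (simp add: E_def X_def)
  qed (auto simp: distr_PiM_sub prob_space_label_law labels.prob_space_axioms)
  then obtain c where c: "AE w in labels. X w = c"
    by blast
  have "AE w in labels. 0 < c \<and> \<phi> (canon w) = c * \<phi>' (canon w)"
    using c AE_GW_D[OF pos] by eventually_elim (auto simp: X_def field_simps zero_less_mult_iff)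
  then have "0 < c" and "AE w in labels. \<phi> (canon w) = c * \<phi>' (canon w)"
    by simp_all
  moreover have "Measurable.pred MTS (\<lambda>t. \<phi> t = c * \<phi>' t)"
    unfolding pred_def by measurable
  ultimately show ?thesis
    using AE_GW_iff by blast
qed

end

theorem mainTheorem2:
  fixes p :: "nat pmf" and G :: "real measure" and \<phi> \<phi>' :: "mtree \<Rightarrow> real"
  assumes p0: "pmf p 0 = 0" and p1: "pmf p 1 < 1"
    and mean: "integrable (measure_pmf p) real"
    and G: "prob_space G" "sets G = sets borel" "AE x in G. 0 \<le> x"
    and phi_meas: "\<phi> \<in> borel_measurable MTS" and phi_pos: "AE t in GW p G. 0 < \<phi> t"
    and phi'_meas: "\<phi>' \<in> borel_measurable MTS" and phi'_pos: "AE t in GW p G. 0 < \<phi>' t"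
  shows "(AE t in GW p G. \<forall>x\<in>vert t. flow \<phi> t x = flow \<phi>' t x)
     \<longleftrightarrow> (\<exists>c>0. AE t in GW p G. \<phi> t = c * \<phi>' t)"
proof -
  interpret marked_GW p G
    using G(1,2) by (simp add: marked_GW_def)
  have pos: "AE t in GW p G. 0 < \<phi> t \<and> 0 < \<phi>' t"
    using phi_pos phi'_pos by eventually_elim simp
  show ?thesis
  proof
    show "\<exists>c>0. AE t in GW p G. \<phi> t = c * \<phi>' t"
      if "AE t in GW p G. \<forall>x\<in>vert t. flow \<phi> t x = flow \<phi>' t x"
      using proportional_if_AE_flow_eq[OF p0 p1 phi_meas phi'_meas pos that] .
  next
    assume "\<exists>c>0. AE t in GW p G. \<phi> t = c * \<phi>' t"
    then obtain c where "0 < c" "AE t in GW p G. \<phi> t = c * \<phi>' t"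
      by blast
    then show "AE t in GW p G. \<forall>x\<in>vert t. flow \<phi> t x = flow \<phi>' t x"
      by (intro AE_flow_eq_if_proportional[OF phi_meas phi'_meas]) simp_all
  qed
qed

end
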